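(* Let $\Delta$ be a group acting (without inversions) $k$-acylindrically, cocompactly and minimally on a tree $X$. Let $H$ be a finitely generated subgroup of $\Delta$, and suppose that $M<H$ is a non-trivial subgroup that is normal in $\Delta$. Then the action of $H$ on $X$ is cocompact.
   Context: An action on a tree is $k$-acylindrical if the stabilizer of every geodesic edge-path of length greater than $k$ is trivial. An action on a tree is minimal if there is no proper invariant subtree, and cocompact if the quotient graph is finite. *)

theory Defs
  imports "HOL-Algebra.Group_Action" "HOL-Algebra.Generated_Groups"
begin

definition walk :: "('v \<Rightarrow> 'v \<Rightarrow> bool) \<Rightarrow> 'v list \<Rightarrow> bool" where
  "walk adj xs \<longleftrightarrow> xs \<noteq> [] \<and> (\<forall>i. Suc i < length xs \<longrightarrow> adj (xs ! i) (xs ! Suc i))"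

definition reduced_walk :: "('v \<Rightarrow> 'v \<Rightarrow> bool) \<Rightarrow> 'v list \<Rightarrow> bool" where
  "reduced_walk adj xs \<longleftrightarrow> walk adj xs \<and> (\<forall>i. i + 2 < length xs \<longrightarrow> xs ! i \<noteq> xs ! (i + 2))"

text \<open>Geodesic edge path: a walk of minimal length among walks with the same endpoints.
Its length (number of edges) is length xs - 1.\<close>
definition geodesic :: "('v \<Rightarrow> 'v \<Rightarrow> bool) \<Rightarrow> 'v list \<Rightarrow> bool" where
  "geodesic adj xs \<longleftrightarrow> walk adj xs \<and>
     (\<forall>ys. walk adj ys \<and> hd ys = hd xs \<and> last ys = last xs \<longrightarrow> length xs \<le> length ys)"

definition connected_in :: "'v set \<Rightarrow> ('v \<Rightarrow> 'v \<Rightarrow> bool) \<Rightarrow> bool" where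
  "connected_in S adj \<longleftrightarrow> (\<forall>x\<in>S. \<forall>y\<in>S. \<exists>xs. walk adj xs \<and> set xs \<subseteq> S \<and> hd xs = x \<and> last xs = y)"

text \<open>A tree: nonempty connected graph without circuits (no reduced closed walk
with at least one edge).\<close>
definition is_tree :: "'v set \<Rightarrow> ('v \<Rightarrow> 'v \<Rightarrow> bool) \<Rightarrow> bool" where
  "is_tree V adj \<longleftrightarrow> V \<noteq> {} \<and>
     (\<forall>x y. adj x y \<longrightarrow> x \<in> V \<and> y \<in> V \<and> adj y x \<and> x \<noteq> y) \<and>
     connected_in V adj \<and>
     \<not> (\<exists>xs. reduced_walk adj xs \<and> length xs \<ge> 2 \<and> hd xs = last xs)"

definition tree_action :: "('g, 'b) monoid_scheme \<Rightarrow> 'v set \<Rightarrow> ('v \<Rightarrow> 'v \<Rightarrow> bool) \<Rightarrow> ('g \<Rightarrow> 'v \<Rightarrow> 'v) \<Rightarrow> bool" where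
  "tree_action G V adj \<phi> \<longleftrightarrow> is_tree V adj \<and> group_action G V \<phi> \<and>
     (\<forall>g\<in>carrier G. \<forall>x\<in>V. \<forall>y\<in>V. adj x y \<longleftrightarrow> adj (\<phi> g x) (\<phi> g y))"

definition without_inversions :: "('g, 'b) monoid_scheme \<Rightarrow> ('v \<Rightarrow> 'v \<Rightarrow> bool) \<Rightarrow> ('g \<Rightarrow> 'v \<Rightarrow> 'v) \<Rightarrow> bool" where
  "without_inversions G adj \<phi> \<longleftrightarrow>
     \<not> (\<exists>g\<in>carrier G. \<exists>x y. adj x y \<and> \<phi> g x = y \<and> \<phi> g y = x)"

definition acylindrical :: "nat \<Rightarrow> ('g, 'b) monoid_scheme \<Rightarrow> ('v \<Rightarrow> 'v \<Rightarrow> bool) \<Rightarrow> ('g \<Rightarrow> 'v \<Rightarrow> 'v) \<Rightarrow> bool" where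
  "acylindrical k G adj \<phi> \<longleftrightarrow>
     (\<forall>xs. geodesic adj xs \<and> length xs - 1 > k \<longrightarrow>
        {g \<in> carrier G. \<forall>v\<in>set xs. \<phi> g v = v} = {\<one>\<^bsub>G\<^esub>})"

definition minimal_action :: "('g, 'b) monoid_scheme \<Rightarrow> 'v set \<Rightarrow> ('v \<Rightarrow> 'v \<Rightarrow> bool) \<Rightarrow> ('g \<Rightarrow> 'v \<Rightarrow> 'v) \<Rightarrow> bool" where
  "minimal_action G V adj \<phi> \<longleftrightarrow>
     (\<forall>S. S \<subseteq> V \<and> S \<noteq> {} \<and> connected_in S adj \<and> (\<forall>g\<in>carrier G. \<phi> g ` S \<subseteq> S) \<longrightarrow> S = V)"

text \<open>Cocompact action of the subset H of group elements: the quotient graph is finite,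
i.e. finitely many H-orbits of vertices and of (unoriented) edges.\<close>
definition cocompact_on :: "'g set \<Rightarrow> 'v set \<Rightarrow> ('v \<Rightarrow> 'v \<Rightarrow> bool) \<Rightarrow> ('g \<Rightarrow> 'v \<Rightarrow> 'v) \<Rightarrow> bool" where
  "cocompact_on H V adj \<phi> \<longleftrightarrow>
     finite {{\<phi> h x | h. h \<in> H} | x. x \<in> V} \<and>
     finite {{{\<phi> h x, \<phi> h y} | h. h \<in> H} | x y. adj x y}"

definition finitely_generated_subgroup :: "('g, 'b) monoid_scheme \<Rightarrow> 'g set \<Rightarrow> bool" where
  "finitely_generated_subgroup G H \<longleftrightarrow> subgroup H G \<and> (\<exists>S. finite S \<and> S \<subseteq> H \<and> generate G S = H)"

end

theory Submission
  imports Defs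
begin

(* Let H be finitely generated and contain the nontrivial normal subgroup M of G.
   (1) If every element of M fixes a vertex, then the tree is finite: for m \<noteq> 1 in M
       fixing p and any g, the fixed trees of m and of g m g\<inverse> meet by Serre's lemma
       (their product lies in M and is elliptic); by k-acylindricity both fixed trees
       have diameter at most k, so the G-orbit of p is bounded, and a minimal action on
       a bounded tree is on a finite tree.
   (2) Otherwise some m in M has no fixed point.  Every vertex of minimal displacement of
       m lies in every M-invariant subtree, so the intersection of all nonempty
       M-invariant subtrees is nonempty; it is G-invariant by normality, hence all of V
       by minimality.  The union of the H-translates of the geodesics from a base vertex
       to its images under a finite generating set of H spans an M-invariant subtree,
       hence the whole tree, so finitely many vertices and edges represent all H-orbits. *)

fun linked :: "('v \<Rightarrow> 'v \<Rightarrow> bool) \<Rightarrow> 'v list \<Rightarrow> bool" where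
  "linked R [] = False"
| "linked R [x] = True"
| "linked R (x # y # xs) = (R x y \<and> linked R (y # xs))"

fun no_backtrack :: "'v list \<Rightarrow> bool" where
  "no_backtrack (x # y # z # xs) = (x \<noteq> z \<and> no_backtrack (y # z # xs))"
| "no_backtrack _ = True"

lemma walk_iff_linked: "walk R xs = linked R xs"
proof (induction R xs rule: linked.induct)
  case (3 R x y xs)
  have "walk R (x # y # xs) = (R x y \<and> walk R (y # xs))"
    unfolding walk_def
  proof safe
    fix i assume h: "\<forall>i. Suc i < length (x # y # xs) \<longrightarrow> R ((x # y # xs) ! i) ((x # y # xs) ! Suc i)"
      "Suc i < length (y # xs)"
    then show "R ((y # xs) ! i) ((y # xs) ! Suc i)" using h(1)[rule_format, of "Suc i"] by simp
  next
    assume "\<forall>i. Suc i < length (x # y # xs) \<longrightarrow> R ((x # y # xs) ! i) ((x # y # xs) ! Suc i)"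
    then show "R x y" by (metis Suc_less_eq length_Cons nth_Cons_0 nth_Cons_Suc zero_less_Suc)
  next
    fix i assume "R x y" "\<forall>i. Suc i < length (y # xs) \<longrightarrow> R ((y # xs) ! i) ((y # xs) ! Suc i)"
      "Suc i < length (x # y # xs)"
    then show "R ((x # y # xs) ! i) ((x # y # xs) ! Suc i)"
      by (cases i) auto
  qed
  then show ?case using 3 by simp
qed (auto simp: walk_def)

lemma no_backtrack_iff: "no_backtrack xs = (\<forall>i. i + 2 < length xs \<longrightarrow> xs ! i \<noteq> xs ! (i + 2))"
proof (induction xs rule: no_backtrack.induct)
  case (1 x y z xs)
  have split: "(\<forall>i::nat. Q i) \<longleftrightarrow> Q 0 \<and> (\<forall>i. Q (Suc i))" for Q
    by (metis not0_implies_Suc)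
  show ?case
    by (subst split) (use 1 in \<open>simp add: numeral_2_eq_2\<close>)
qed (auto simp: numeral_2_eq_2)

lemma reduced_walk_iff: "reduced_walk R xs = (linked R xs \<and> no_backtrack xs)"
  unfolding reduced_walk_def walk_iff_linked no_backtrack_iff by simp

lemma linked_append: "linked R (xs @ [p]) \<Longrightarrow> linked R (p # ys) \<Longrightarrow> linked R (xs @ p # ys)"
proof (induction xs)
  case (Cons a xs) then show ?case by (cases xs) auto
qed simp

lemma linked_tl: "linked R (x # xs) \<Longrightarrow> xs \<noteq> [] \<Longrightarrow> linked R xs"
  by (cases xs) auto

lemma no_backtrack_tl: "no_backtrack (x # xs) \<Longrightarrow> no_backtrack xs"
  by (cases xs rule: no_backtrack.cases) auto

lemma no_backtrack_append:
  assumes "no_backtrack (xs @ [p])" "no_backtrack (p # ys)"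
    and "xs \<noteq> [] \<Longrightarrow> ys \<noteq> [] \<Longrightarrow> last xs \<noteq> hd ys"
  shows "no_backtrack (xs @ p # ys)"
  using assms
proof (induction xs)
  case (Cons a xs)
  show ?case
  proof (cases xs)
    case Nil
    then show ?thesis using Cons.prems by (cases ys) auto
  next
    case (Cons b xs')
    have "no_backtrack (xs @ p # ys)"
      by (rule Cons.IH) (use Cons.prems no_backtrack_tl \<open>xs = b # xs'\<close> in auto)
    then show ?thesis
      using Cons.prems(1) \<open>xs = b # xs'\<close> by (cases xs') auto
  qed
qed simp

lemma no_backtrack_prefix: "no_backtrack (xs @ ys) \<Longrightarrow> no_backtrack xs"
  unfolding no_backtrack_iff
proof (intro allI impI)
  fix i assume h: "\<forall>i. i + 2 < length (xs @ ys) \<longrightarrow> (xs @ ys) ! i \<noteq> (xs @ ys) ! (i + 2)" "i + 2 < length xs"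
  then show "xs ! i \<noteq> xs ! (i + 2)" using h(1)[rule_format, of i] by (simp add: nth_append)
qed

lemma linked_prefix: "linked R (xs @ ys) \<Longrightarrow> xs \<noteq> [] \<Longrightarrow> linked R xs"
proof (induction xs)
  case (Cons a xs) then show ?case by (cases xs) auto
qed simp

lemma no_backtrack_rev: "no_backtrack xs \<Longrightarrow> no_backtrack (rev xs)"
  unfolding no_backtrack_iff
proof (intro allI impI)
  fix i assume h: "\<forall>i. i + 2 < length xs \<longrightarrow> xs ! i \<noteq> xs ! (i + 2)" "i + 2 < length (rev xs)"
  define j where "j = length xs - 3 - i"
  have "rev xs ! i = xs ! (j + 2)" "rev xs ! (i + 2) = xs ! j"
    using h(2) by (auto simp: rev_nth j_def intro!: arg_cong[where f = "(!) xs"])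
  moreover have "j + 2 < length xs" using h(2) unfolding j_def by simp
  ultimately show "rev xs ! i \<noteq> rev xs ! (i + 2)" using h(1)[rule_format, of j] by auto
qed

lemma linked_rev: "(\<And>x y. R x y \<Longrightarrow> R y x) \<Longrightarrow> linked R xs \<Longrightarrow> linked R (rev xs)"
proof (induction xs)
  case (Cons a xs)
  show ?case
  proof (cases xs)
    case (Cons b xs')
    have "linked R (rev xs' @ [b])" "linked R [b, a]"
      using Cons.IH Cons.prems \<open>xs = b # xs'\<close> by auto
    then show ?thesis using linked_append[of R "rev xs'" b "[a]"] \<open>xs = b # xs'\<close> by simp
  qed simp
qed simp

lemma no_backtrack_map: "inj_on f (set xs) \<Longrightarrow> no_backtrack xs \<Longrightarrow> no_backtrack (map f xs)"
  by (induction xs rule: no_backtrack.induct) (auto simp: inj_on_def)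

lemma linked_map:
  "linked R xs \<Longrightarrow> (\<And>x y. x \<in> set xs \<Longrightarrow> y \<in> set xs \<Longrightarrow> R x y \<Longrightarrow> R (f x) (f y)) \<Longrightarrow> linked R (map f xs)"
  by (induction R xs rule: linked.induct) auto

lemma linked_mono: "linked R xs \<Longrightarrow> (\<And>a b. R a b \<Longrightarrow> R' a b) \<Longrightarrow> linked R' xs"
  by (induction R xs rule: linked.induct) auto

lemma reduce_walk:
  "linked R xs \<Longrightarrow> \<exists>ys. linked R ys \<and> no_backtrack ys \<and> hd ys = hd xs \<and> last ys = last xs
     \<and> set ys \<subseteq> set xs \<and> length ys \<le> length xs"
proof (induction xs)
  case (Cons x xs)
  show ?case
  proof (cases xs)
    case Nil then show ?thesis by (intro exI[of _ "[x]"]) simp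
  next
    case (Cons y xs')
    then have "linked R xs" "R x y" using Cons.prems by auto
    then obtain ys where ys: "linked R ys" "no_backtrack ys" "hd ys = y" "last ys = last xs"
        "set ys \<subseteq> set xs" "length ys \<le> length xs"
      using Cons.IH \<open>xs = y # xs'\<close> by auto
    then obtain ys' where ys': "ys = y # ys'" by (cases ys) auto
    show ?thesis
    proof (cases "ys' \<noteq> [] \<and> hd ys' = x")
      case True
      then show ?thesis using ys ys' \<open>xs = y # xs'\<close>
        by (intro exI[of _ ys']) (cases ys', auto dest: no_backtrack_tl)
    next
      case False
      then show ?thesis using ys ys' \<open>xs = y # xs'\<close> \<open>R x y\<close>
        by (intro exI[of _ "x # ys"]) (cases ys', auto)
    qed
  qed
qed simp

lemma linked_rtranclp: "linked R xs \<Longrightarrow> z \<in> set xs \<Longrightarrow> R\<^sup>*\<^sup>* (hd xs) z"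
  by (induction R xs rule: linked.induct) (auto intro: converse_rtranclp_into_rtranclp)

lemma linked_snoc: "linked R xs \<Longrightarrow> R (last xs) z \<Longrightarrow> linked R (xs @ [z])"
  by (induction R xs rule: linked.induct) auto

lemma rtranclp_linked: "R\<^sup>*\<^sup>* x y \<Longrightarrow> \<exists>ws. linked R ws \<and> hd ws = x \<and> last ws = y"
proof (induction rule: rtranclp_induct)
  case base
  then show ?case by (intro exI[of _ "[x]"]) simp
next
  case (step y z)
  then obtain ws where ws: "linked R ws" "hd ws = x" "last ws = y" by blast
  then have "ws \<noteq> []" by auto
  then show ?case using ws linked_snoc[OF ws(1)] step.hyps(2)
    by (intro exI[of _ "ws @ [z]"]) simp
qed
text \<open>A tree is given by its vertex set and adjacency relation; between any two vertices
  there is exactly one walk without backtracking, the geodesic, and its number of edges is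
  the tree distance.\<close>

locale tree =
  fixes V :: "'v set" and adj :: "'v \<Rightarrow> 'v \<Rightarrow> bool"
  assumes is_tree: "is_tree V adj"
begin

lemma adj_sym: "adj x y \<Longrightarrow> adj y x"
  using is_tree unfolding is_tree_def by blast

lemma adj_in_V: "adj x y \<Longrightarrow> x \<in> V" "adj x y \<Longrightarrow> y \<in> V"
  using is_tree unfolding is_tree_def by blast+

lemma V_nonempty: "V \<noteq> {}"
  using is_tree unfolding is_tree_def by blast

lemma no_circuit: "linked adj xs \<Longrightarrow> no_backtrack xs \<Longrightarrow> length xs \<ge> 2 \<Longrightarrow> hd xs = last xs \<Longrightarrow> False"
  using is_tree unfolding is_tree_def reduced_walk_iff by blast

lemma reduced_walk_exists:
  assumes "x \<in> V" "y \<in> V" shows "\<exists>xs. linked adj xs \<and> no_backtrack xs \<and> hd xs = x \<and> last xs = y"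
proof -
  obtain xs where "walk adj xs" "hd xs = x" "last xs = y"
    using is_tree assms unfolding is_tree_def connected_in_def by blast
  then show ?thesis using reduce_walk[of adj xs] by (auto simp: walk_iff_linked)
qed

lemma linked_in_V: "linked adj xs \<Longrightarrow> hd xs \<in> V \<Longrightarrow> set xs \<subseteq> V"
proof (induction xs)
  case (Cons a xs) then show ?case by (cases xs) (auto dest: adj_in_V)
qed simp

text \<open>Uniqueness of reduced walks: two different ones with common ends would combine
  into a circuit.\<close>

lemma closed_reduced_walk: "linked adj xs \<Longrightarrow> no_backtrack xs \<Longrightarrow> hd xs = last xs \<Longrightarrow> tl xs = []"
  using no_circuit[of xs] by (cases xs) (auto simp: Suc_le_eq split: if_splits)

lemma reduced_walk_unique:
  assumes "linked adj xs" "no_backtrack xs" "linked adj ys" "no_backtrack ys"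
    and "hd xs = hd ys" "last xs = last ys"
  shows "xs = ys"
  using assms
proof (induction xs arbitrary: ys)
  case (Cons a xs')
  obtain ys' where ys: "ys = a # ys'" using Cons.prems(3,5) by (cases ys) auto
  consider (short) "xs' = [] \<or> ys' = []"
    | (same) "xs' \<noteq> []" "ys' \<noteq> []" "hd xs' = hd ys'"
    | (branch) "xs' \<noteq> []" "ys' \<noteq> []" "hd xs' \<noteq> hd ys'"
    by (cases "xs' = [] \<or> ys' = []"; cases "hd xs' = hd ys'") auto
  then show ?case
  proof cases
    case short
    have hd_ys: "hd ys = a" using Cons.prems(5) by simp
    have "ys' = []" if "xs' = []"
    proof -
      have "last ys = a" using Cons.prems(6) that by simp
      then show ?thesis using closed_reduced_walk[OF Cons.prems(3,4)] hd_ys ys by simp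
    qed
    moreover have "xs' = []" if "ys' = []"
    proof -
      have "last (a # xs') = a" using Cons.prems(6) ys that by simp
      then show ?thesis using closed_reduced_walk[OF Cons.prems(1,2)] by simp
    qed
    ultimately show ?thesis using short ys by auto
  next
    case same
    have "xs' = ys'"
    proof (rule Cons.IH)
      show "linked adj xs'" "linked adj ys'"
        using linked_tl[OF Cons.prems(1)] linked_tl[of adj a ys'] Cons.prems(3) ys same by auto
      show "no_backtrack xs'" "no_backtrack ys'"
        using no_backtrack_tl[OF Cons.prems(2)] no_backtrack_tl[of a ys'] Cons.prems(4) ys by auto
      show "hd xs' = hd ys'" "last xs' = last ys'" using Cons.prems(6) ys same by auto
    qed
    then show ?thesis using ys by simp
  next
    case branch
    let ?c = "rev xs' @ a # ys'"
    have "linked adj (rev xs' @ [a])" using linked_rev[OF _ Cons.prems(1)] adj_sym by auto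
    moreover have "linked adj (a # ys')" using Cons.prems(3) ys by simp
    ultimately have "linked adj ?c" by (rule linked_append)
    moreover have "no_backtrack ?c"
      by (rule no_backtrack_append) (use no_backtrack_rev[OF Cons.prems(2)] Cons.prems(4) ys branch in
          \<open>auto simp: last_rev\<close>)
    moreover have "length ?c \<ge> 2" using branch by (cases xs') auto
    moreover have "hd ?c = last ?c" using Cons.prems(6) ys branch by (simp add: hd_rev)
    ultimately have False by (rule no_circuit)
    then show ?thesis ..
  qed
qed simp

definition geo :: "'v \<Rightarrow> 'v \<Rightarrow> 'v list" where
  "geo x y = (THE xs. linked adj xs \<and> no_backtrack xs \<and> hd xs = x \<and> last xs = y)"

definition tdist :: "'v \<Rightarrow> 'v \<Rightarrow> nat" where
  "tdist x y = length (geo x y) - 1"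

lemma geo_unique: "linked adj xs \<Longrightarrow> no_backtrack xs \<Longrightarrow> hd xs = x \<Longrightarrow> last xs = y \<Longrightarrow> geo x y = xs"
  unfolding geo_def by (rule the_equality) (auto intro: reduced_walk_unique)

lemma geo:
  assumes "x \<in> V" "y \<in> V"
  shows "linked adj (geo x y)" "no_backtrack (geo x y)" "hd (geo x y) = x" "last (geo x y) = y"
proof -
  obtain xs where xs: "linked adj xs \<and> no_backtrack xs \<and> hd xs = x \<and> last xs = y"
    using reduced_walk_exists assms by blast
  then have "geo x y = xs" using geo_unique by blast
  then show "linked adj (geo x y)" "no_backtrack (geo x y)" "hd (geo x y) = x" "last (geo x y) = y"
    using xs by auto
qed

lemma geo_nonempty: "x \<in> V \<Longrightarrow> y \<in> V \<Longrightarrow> geo x y \<noteq> []"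
  using geo(1)[of x y] by auto

lemma geo_in_V: "x \<in> V \<Longrightarrow> y \<in> V \<Longrightarrow> set (geo x y) \<subseteq> V"
  by (rule linked_in_V) (use geo in simp_all)

lemma geo_sym: "x \<in> V \<Longrightarrow> y \<in> V \<Longrightarrow> geo y x = rev (geo x y)"
  by (rule geo_unique) (auto simp: geo hd_rev last_rev intro: linked_rev no_backtrack_rev adj_sym)

lemma geo_adj: "adj x y \<Longrightarrow> geo x y = [x, y]"
  by (rule geo_unique) auto

lemma tdist_le_walk: "linked adj ws \<Longrightarrow> hd ws = x \<Longrightarrow> last ws = y \<Longrightarrow> tdist x y + 1 \<le> length ws"
proof -
  assume ws: "linked adj ws" "hd ws = x" "last ws = y"
  then obtain ys where "linked adj ys \<and> no_backtrack ys \<and> hd ys = x \<and> last ys = y \<and> length ys \<le> length ws"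
    using reduce_walk[OF ws(1)] by blast
  then have "geo x y = ys" "length ys \<le> length ws" "ys \<noteq> []" using geo_unique by auto
  then show ?thesis unfolding tdist_def by simp
qed

lemma tdist_sym: "x \<in> V \<Longrightarrow> y \<in> V \<Longrightarrow> tdist y x = tdist x y"
  unfolding tdist_def using geo_sym[of x y] by simp

lemma tdist_zero: assumes "x \<in> V" "y \<in> V" "tdist x y = 0" shows "x = y"
proof -
  have "length (geo x y) = 1" using assms(3) geo_nonempty[OF assms(1,2)] unfolding tdist_def
    by (cases "geo x y") simp_all
  then obtain z where "geo x y = [z]" by (auto simp: length_Suc_conv)
  then show ?thesis using geo(3,4)[OF assms(1,2)] by simp
qed

lemma tdist_one_adj: assumes "x \<in> V" "y \<in> V" "tdist x y = 1" shows "adj x y"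
proof -
  have "length (geo x y) = 2" using assms(3) geo_nonempty[OF assms(1,2)] unfolding tdist_def
    by (cases "geo x y") auto
  then obtain a b where "geo x y = [a, b]" by (auto simp: length_Suc_conv numeral_2_eq_2)
  then show ?thesis using geo[OF assms(1,2)] by simp
qed

lemma tdist_triangle: assumes "x \<in> V" "y \<in> V" "z \<in> V" shows "tdist x z \<le> tdist x y + tdist y z"
proof -
  obtain as where as: "geo x y = as @ [y]"
    using geo(4)[OF assms(1,2)] geo_nonempty[OF assms(1,2)] by (metis append_butlast_last_id)
  obtain bs where bs: "geo y z = y # bs"
    using geo(3)[OF assms(2,3)] geo_nonempty[OF assms(2,3)] by (metis list.collapse)
  have "linked adj (as @ y # bs)"
    using geo(1)[OF assms(1,2)] geo(1)[OF assms(2,3)] unfolding as bs by (rule linked_append)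
  moreover have "hd (as @ y # bs) = x" using geo(3)[OF assms(1,2)] as by (cases as) auto
  moreover have "last (as @ y # bs) = z" using geo(4)[OF assms(2,3)] bs by (cases bs) auto
  ultimately have "tdist x z + 1 \<le> length (as @ y # bs)" by (rule tdist_le_walk)
  then show ?thesis unfolding tdist_def as bs by simp
qed

lemma geo_geodesic: assumes "x \<in> V" "y \<in> V" shows "geodesic adj (geo x y)"
  unfolding geodesic_def
proof (intro conjI allI impI)
  show "walk adj (geo x y)" unfolding walk_iff_linked using geo[OF assms] by simp
  fix ys assume "walk adj ys \<and> hd ys = hd (geo x y) \<and> last ys = last (geo x y)"
  then have "tdist x y + 1 \<le> length ys" using tdist_le_walk geo[OF assms] unfolding walk_iff_linked by simp
  then show "length (geo x y) \<le> length ys" unfolding tdist_def using geo_nonempty[OF assms] by (cases "geo x y") auto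
qed

text \<open>Along an edge the distance to a fixed vertex w changes by exactly one: the geodesic
  from one end to w passes through the other end.\<close>

lemma adj_step:
  assumes "adj a b" "w \<in> V"
  shows "(geo a w = a # geo b w \<and> tdist a w = Suc (tdist b w))
       \<or> (geo b w = b # geo a w \<and> tdist b w = Suc (tdist a w))"
proof -
  have aV: "a \<in> V" and bV: "b \<in> V" using assms adj_in_V by auto
  obtain ys' where ys: "geo b w = b # ys'" using geo(3)[OF bV assms(2)] geo_nonempty[OF bV assms(2)]
    by (metis list.collapse)
  show ?thesis
  proof (cases "ys' \<noteq> [] \<and> hd ys' = a")
    case True
    then obtain r where r: "ys' = a # r" by (cases ys') auto
    have "geo a w = a # r"
    proof (rule geo_unique)
      show "linked adj (a # r)" using geo(1)[OF bV assms(2)] unfolding ys r by simp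
      show "no_backtrack (a # r)" using geo(2)[OF bV assms(2)] unfolding ys r by (rule no_backtrack_tl)
      show "last (a # r) = w" using geo(4)[OF bV assms(2)] unfolding ys r by simp
    qed simp
    then have g: "geo b w = b # geo a w" using ys r by simp
    then have "tdist b w = Suc (tdist a w)" unfolding tdist_def using \<open>geo a w = a # r\<close> by simp
    then show ?thesis using g by simp
  next
    case False
    have g: "geo a w = a # geo b w"
    proof (rule geo_unique)
      show "linked adj (a # geo b w)" using geo(1)[OF bV assms(2)] assms(1) unfolding ys by simp
      show "no_backtrack (a # geo b w)" using geo(2)[OF bV assms(2)] False unfolding ys by (cases ys') auto
      show "last (a # geo b w) = w" using geo(4)[OF bV assms(2)] unfolding ys by simp
    qed simp
    then have "tdist a w = Suc (tdist b w)" unfolding tdist_def using ys by simp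
    then show ?thesis using g by simp
  qed
qed

lemma tdist_increasing:
  "linked adj (a # b # rest) \<Longrightarrow> no_backtrack (a # b # rest) \<Longrightarrow> w \<in> V \<Longrightarrow> tdist b w = Suc (tdist a w)
   \<Longrightarrow> \<forall>i < length (a # b # rest). tdist ((a # b # rest) ! i) w = tdist a w + i"
proof (induction rest arbitrary: a b)
  case Nil
  show ?case
  proof (intro allI impI)
    fix i assume "i < length [a, b]"
    then show "tdist ([a, b] ! i) w = tdist a w + i" using Nil.prems(4) by (cases i) auto
  qed
next
  case (Cons c rest)
  have ab: "adj a b" and bc: "adj b c" using Cons.prems(1) by auto
  have aV: "a \<in> V" and cV: "c \<in> V" using ab bc adj_in_V by auto
  have gb: "geo b w = b # geo a w" using adj_step[OF ab Cons.prems(3)] Cons.prems(4) by auto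
  have dc: "tdist c w = Suc (tdist b w)"
  proof -
    { assume "geo b w = b # geo c w"
      then have "geo c w = geo a w" using gb by simp
      then have "c = a" using geo(3)[OF aV Cons.prems(3)] geo(3)[OF cV Cons.prems(3)] by simp
      then have False using Cons.prems(2) by simp }
    then show ?thesis using adj_step[OF bc Cons.prems(3)] by auto
  qed
  have ih: "\<forall>i<length (b # c # rest). tdist ((b # c # rest) ! i) w = tdist b w + i"
    using Cons.IH[of b c] Cons.prems dc by (auto dest: no_backtrack_tl)
  show ?case
  proof (intro allI impI)
    fix i assume "i < length (a # b # c # rest)"
    then show "tdist ((a # b # c # rest) ! i) w = tdist a w + i"
      using ih Cons.prems(4) by (cases i) auto
  qed
qed

text \<open>Hence along a reduced walk the distance to w first decreases and then increases:
  at each position it has either decreased by one at every step so far, or will increase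
  by one at every remaining step.\<close>

lemma tdist_unimodal:
  "linked adj vs \<Longrightarrow> no_backtrack vs \<Longrightarrow> w \<in> V \<Longrightarrow> hd vs \<in> V \<Longrightarrow> i < length vs \<Longrightarrow>
   tdist (vs ! i) w + i = tdist (hd vs) w \<or> tdist (last vs) w = tdist (vs ! i) w + (length vs - 1 - i)"
proof (induction vs arbitrary: i)
  case Nil then show ?case by simp
next
  case (Cons a vs')
  show ?case
  proof (cases vs')
    case Nil then show ?thesis using Cons.prems by simp
  next
    case (Cons b r)
    have ab: "adj a b" using Cons.prems(1) \<open>vs' = b # r\<close> by simp
    have bV: "b \<in> V" using ab adj_in_V by auto
    show ?thesis
    proof (cases "tdist a w = Suc (tdist b w)")
      case True
      show ?thesis
      proof (cases i)
        case 0 then show ?thesis by simp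
      next
        case (Suc j)
        have "tdist (vs' ! j) w + j = tdist (hd vs') w \<or> tdist (last vs') w = tdist (vs' ! j) w + (length vs' - 1 - j)"
        proof (rule Cons.IH)
          show "linked adj vs'" using Cons.prems(1) \<open>vs' = b # r\<close> by simp
          show "no_backtrack vs'" using Cons.prems(2) by (rule no_backtrack_tl)
        qed (use Cons.prems bV \<open>vs' = b # r\<close> Suc in auto)
        then show ?thesis using True Suc \<open>vs' = b # r\<close> by auto
      qed
    next
      case False
      then have "tdist b w = Suc (tdist a w)" using adj_step[OF ab Cons.prems(3)] by auto
      then have all: "\<forall>i<length (a # b # r). tdist ((a # b # r) ! i) w = tdist a w + i"
        using tdist_increasing[of a b r w] Cons.prems \<open>vs' = b # r\<close> by simp
      have l: "last (a # vs') = (a # b # r) ! Suc (length r)" using \<open>vs' = b # r\<close> by (simp add: last_conv_nth)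
      have "tdist ((a # b # r) ! Suc (length r)) w = tdist a w + Suc (length r)" using all[rule_format, of "Suc (length r)"] by simp
      then have "tdist (last (a # vs')) w = tdist a w + (length (a # vs') - 1)"
        using l \<open>vs' = b # r\<close> by simp
      moreover have "tdist ((a # vs') ! i) w = tdist a w + i" using all \<open>vs' = b # r\<close> Cons.prems(5) by simp
      ultimately show ?thesis using Cons.prems(5) by simp
    qed
  qed
qed

lemma geo_in_ball:
  assumes "x \<in> V" "y \<in> V" "w \<in> V" "tdist x w \<le> r" "tdist y w \<le> r" "v \<in> set (geo x y)"
  shows "tdist v w \<le> r"
proof -
  obtain i where i: "i < length (geo x y)" "v = geo x y ! i" using assms(6) by (metis in_set_conv_nth)
  have "tdist (geo x y ! i) w + i = tdist (hd (geo x y)) w \<or> tdist (last (geo x y)) w = tdist (geo x y ! i) w + (length (geo x y) - 1 - i)"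
    by (rule tdist_unimodal) (use geo[OF assms(1,2)] assms i in auto)
  then show ?thesis using geo(3,4)[OF assms(1,2)] assms(4,5) i(2) by auto
qed

definition tree_aut :: "('v \<Rightarrow> 'v) \<Rightarrow> bool" where
  "tree_aut f \<longleftrightarrow> inj_on f V \<and> f ` V \<subseteq> V \<and> (\<forall>x\<in>V. \<forall>y\<in>V. adj x y \<longleftrightarrow> adj (f x) (f y))"

lemma tree_aut_geo: assumes "tree_aut f" "x \<in> V" "y \<in> V" shows "geo (f x) (f y) = map f (geo x y)"
proof (rule geo_unique)
  have sV: "set (geo x y) \<subseteq> V" using geo_in_V assms by blast
  show "linked adj (map f (geo x y))"
    by (rule linked_map[OF geo(1)[OF assms(2,3)]]) (use assms(1) sV in \<open>auto simp: tree_aut_def\<close>)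
  show "no_backtrack (map f (geo x y))"
    by (rule no_backtrack_map[OF _ geo(2)[OF assms(2,3)]])
      (use assms(1) sV in \<open>auto simp: tree_aut_def intro: inj_on_subset\<close>)
  show "hd (map f (geo x y)) = f x"
    using geo_nonempty[OF assms(2,3)] geo(3)[OF assms(2,3)] by (simp add: hd_map)
  show "last (map f (geo x y)) = f y"
    using geo_nonempty[OF assms(2,3)] geo(4)[OF assms(2,3)] by (simp add: last_map)
qed

lemma tree_aut_tdist: "tree_aut f \<Longrightarrow> x \<in> V \<Longrightarrow> y \<in> V \<Longrightarrow> tdist (f x) (f y) = tdist x y"
  unfolding tdist_def using tree_aut_geo by simp

lemma geo_concat:
  assumes "x \<in> V" "p \<in> V" "y \<in> V" "geo x p = as @ [p]" "geo p y = p # bs"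
    and "as \<noteq> [] \<Longrightarrow> bs \<noteq> [] \<Longrightarrow> last as \<noteq> hd bs"
  shows "geo x y = as @ p # bs"
proof (rule geo_unique)
  show "linked adj (as @ p # bs)"
    using geo(1)[OF assms(1,2)] geo(1)[OF assms(2,3)] unfolding assms(4,5) by (rule linked_append)
  show "no_backtrack (as @ p # bs)"
    using geo(2)[OF assms(1,2)] geo(2)[OF assms(2,3)] assms(6) unfolding assms(4,5)
    by (rule no_backtrack_append)
  show "hd (as @ p # bs) = x" using geo(3)[OF assms(1,2)] unfolding assms(4) by (cases as) auto
  show "last (as @ p # bs) = y" using geo(4)[OF assms(2,3)] unfolding assms(5) by (cases bs) auto
qed

definition subtree :: "'v set \<Rightarrow> bool" where
  "subtree S \<longleftrightarrow> S \<subseteq> V \<and> (\<forall>x\<in>S. \<forall>y\<in>S. set (geo x y) \<subseteq> S)"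

lemma subtree_in_V: "subtree S \<Longrightarrow> S \<subseteq> V"
  unfolding subtree_def by blast

lemma subtree_geo: "subtree S \<Longrightarrow> x \<in> S \<Longrightarrow> y \<in> S \<Longrightarrow> set (geo x y) \<subseteq> S"
  unfolding subtree_def by blast

lemma subtree_connected: assumes "subtree S" shows "connected_in S adj"
  unfolding connected_in_def
proof (intro ballI)
  fix x y assume "x \<in> S" "y \<in> S"
  then have "x \<in> V" "y \<in> V" using subtree_in_V[OF assms] by auto
  then show "\<exists>xs. walk adj xs \<and> set xs \<subseteq> S \<and> hd xs = x \<and> last xs = y"
    using geo[of x y] subtree_geo[OF assms \<open>x \<in> S\<close> \<open>y \<in> S\<close>] unfolding walk_iff_linked
    by (intro exI[of _ "geo x y"]) auto
qed

lemma subtree_Inter: "(\<And>S. S \<in> F \<Longrightarrow> subtree S) \<Longrightarrow> subtree (V \<inter> \<Inter>F)"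
  unfolding subtree_def using geo_in_V by blast

lemma subtree_image: assumes "tree_aut f" "subtree S" shows "subtree (f ` S)"
  unfolding subtree_def
proof (intro conjI ballI)
  show "f ` S \<subseteq> V" using assms subtree_in_V unfolding tree_aut_def by blast
  fix x y assume "x \<in> f ` S" "y \<in> f ` S"
  then obtain a b where ab: "a \<in> S" "b \<in> S" "x = f a" "y = f b" by blast
  then have "a \<in> V" "b \<in> V" using subtree_in_V[OF assms(2)] by auto
  then have "geo x y = map f (geo a b)" using tree_aut_geo[OF assms(1)] ab by simp
  then show "set (geo x y) \<subseteq> f ` S" using subtree_geo[OF assms(2) ab(1,2)] by auto
qed

definition ball_around :: "'v set \<Rightarrow> nat \<Rightarrow> 'v set" where
  "ball_around W r = {x \<in> V. \<forall>w\<in>W. tdist x w \<le> r}"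

lemma subtree_ball_around: assumes "W \<subseteq> V" shows "subtree (ball_around W r)"
  unfolding subtree_def
proof (intro conjI ballI subsetI)
  fix x y v assume x: "x \<in> ball_around W r" and y: "y \<in> ball_around W r" and v: "v \<in> set (geo x y)"
  have xV: "x \<in> V" and yV: "y \<in> V" using x y unfolding ball_around_def by auto
  have "tdist v w \<le> r" if "w \<in> W" for w
    using geo_in_ball[OF xV yV _ _ _ v] x y that assms unfolding ball_around_def by auto
  then show "v \<in> ball_around W r" using geo_in_V[OF xV yV] v unfolding ball_around_def by auto
qed (auto simp: ball_around_def)

definition fixed :: "('v \<Rightarrow> 'v) \<Rightarrow> 'v set" where
  "fixed f = {x \<in> V. f x = x}"

lemma fixed_subtree: assumes "tree_aut f" shows "subtree (fixed f)"
  unfolding subtree_def fixed_def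
proof (intro conjI ballI subsetI)
  fix x y v assume x: "x \<in> {x \<in> V. f x = x}" and y: "y \<in> {x \<in> V. f x = x}" and v: "v \<in> set (geo x y)"
  have "map f (geo x y) = geo x y" using tree_aut_geo[OF assms, of x y] x y by simp
  then have "f v = v" using v by (metis map_eq_conv map_ident)
  then show "v \<in> {x \<in> V. f x = x}" using geo_in_V[of x y] x y v by auto
qed auto

definition nearest :: "'v set \<Rightarrow> 'v \<Rightarrow> 'v \<Rightarrow> bool" where
  "nearest S x p \<longleftrightarrow> p \<in> S \<and> (\<forall>q\<in>S. tdist x p \<le> tdist x q)"

lemma nearest_exists: "S \<noteq> {} \<Longrightarrow> \<exists>p. nearest S x p"
  unfolding nearest_def using ex_has_least_nat[of "\<lambda>p. p \<in> S" _ "tdist x"] by blast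

lemma nearest_path:
  assumes "subtree S" "nearest S x p" "x \<in> V" "x \<notin> S"
  shows "\<exists>as. geo x p = as @ [p] \<and> as \<noteq> [] \<and> last as \<notin> S \<and> last as \<in> V"
proof -
  have pS: "p \<in> S" and pmin: "\<forall>q\<in>S. tdist x p \<le> tdist x q" using assms(2) unfolding nearest_def by auto
  have pV: "p \<in> V" using pS subtree_in_V[OF assms(1)] by auto
  define as where "as = butlast (geo x p)"
  have g: "geo x p = as @ [p]" unfolding as_def using geo_nonempty[OF assms(3) pV] geo(4)[OF assms(3) pV]
    by (metis append_butlast_last_id)
  have ne: "as \<noteq> []"
  proof
    assume "as = []"
    then have "x = p" using g geo(3)[OF assms(3) pV] by simp
    then show False using assms(4) pS by simp
  qed
  have "geo x (last as) = as"
  proof (rule geo_unique)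
    show "linked adj as" using geo(1)[OF assms(3) pV] ne unfolding g by (rule linked_prefix)
    show "no_backtrack as" using geo(2)[OF assms(3) pV] unfolding g by (rule no_backtrack_prefix)
    show "hd as = x" using g ne geo(3)[OF assms(3) pV] by simp
  qed simp
  then have "tdist x (last as) < tdist x p" unfolding tdist_def g using ne by (cases as) auto
  then have "last as \<notin> S" using pmin by force
  moreover have "last as \<in> V" using g ne geo_in_V[OF assms(3) pV] by auto
  ultimately show ?thesis using g ne by blast
qed

lemma tree_aut_nearest:
  assumes "tree_aut f" "f ` S = S" "S \<subseteq> V" "x \<in> V" "nearest S x p"
  shows "nearest S (f x) (f p)"
  unfolding nearest_def
proof (intro conjI ballI)
  have pS: "p \<in> S" using assms(5) unfolding nearest_def by simp
  then show "f p \<in> S" using assms(2) by blast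
  fix q assume "q \<in> S"
  then obtain s where s: "s \<in> S" "q = f s" using assms(2) by blast
  have "tdist (f x) (f p) = tdist x p" using tree_aut_tdist[OF assms(1,4)] pS assms(3) by blast
  also have "\<dots> \<le> tdist x s" using assms(5) s(1) unfolding nearest_def by blast
  also have "\<dots> = tdist (f x) q" using tree_aut_tdist[OF assms(1,4)] s assms(3) by auto
  finally show "tdist (f x) (f p) \<le> tdist (f x) q" .
qed

lemma tdist_via_nearest:
  assumes S: "subtree S" and x: "x \<in> V" "x \<notin> S" and y: "y \<in> V" "y \<notin> S"
    and p: "nearest S x p" and q: "nearest S y q" and "p \<noteq> q"
  shows "tdist x y = tdist x p + tdist p q + tdist q y"
proof -
  have pS: "p \<in> S" and qS: "q \<in> S" using p q unfolding nearest_def by auto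
  have pV: "p \<in> V" and qV: "q \<in> V" using pS qS subtree_in_V[OF S] by auto
  obtain as where as: "geo x p = as @ [p]" "last as \<notin> S" using nearest_path[OF S p x] by blast
  obtain bs where bs: "geo y q = bs @ [q]" "bs \<noteq> []" "last bs \<notin> S" using nearest_path[OF S q y] by blast
  obtain cs where cs: "geo p q = p # cs @ [q]"
  proof -
    obtain ds where ds: "geo p q = p # ds"
      using geo(3)[OF pV qV] geo_nonempty[OF pV qV] by (metis list.collapse)
    then have "ds \<noteq> []" using geo(4)[OF pV qV] \<open>p \<noteq> q\<close> by auto
    then obtain es e where "ds = es @ [e]" by (cases ds rule: rev_cases) auto
    then show thesis using that[of es] ds geo(4)[OF pV qV] by simp
  qed
  have csS: "set (p # cs @ [q]) \<subseteq> S" using subtree_geo[OF S pS qS] unfolding cs .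
  have xq: "geo x q = (as @ p # cs) @ [q]"
    using geo_concat[OF x(1) pV qV as(1) cs] as(2) csS by (cases cs) auto
  have qy: "geo q y = q # rev bs" using geo_sym[OF y(1) qV] bs(1) by simp
  have "last (as @ p # cs) \<in> S" using csS by (cases cs rule: rev_cases) auto
  then have "last (as @ p # cs) \<noteq> hd (rev bs)" using bs(2,3) by (auto simp: hd_rev)
  then have "geo x y = (as @ p # cs) @ q # rev bs" using geo_concat[OF x(1) qV y(1) xq qy] by simp
  moreover have "tdist q y = length bs" using tdist_sym[OF y(1) qV] bs(1) unfolding tdist_def by simp
  ultimately show ?thesis unfolding tdist_def as(1) cs by simp
qed

text \<open>If a fixed-point-free automorphism f maps a nonempty subtree S onto itself, every
  vertex of minimal displacement lies in S: otherwise the geodesic from it to its image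
  would pass through its projection p to S and through f p, making it longer than the
  geodesic from p to f p.\<close>

lemma min_displacement_in_subtree:
  assumes f: "tree_aut f" "fixed f = {}" and x0: "x0 \<in> V" "\<forall>x\<in>V. tdist x0 (f x0) \<le> tdist x (f x)"
    and S: "subtree S" "S \<noteq> {}" "f ` S = S"
  shows "x0 \<in> S"
proof (rule ccontr)
  assume x0S: "x0 \<notin> S"
  have SV: "S \<subseteq> V" using subtree_in_V[OF S(1)] .
  obtain p where p: "nearest S x0 p" using nearest_exists[OF S(2)] by blast
  have pS: "p \<in> S" and pV: "p \<in> V" using p SV unfolding nearest_def by auto
  have fx0V: "f x0 \<in> V" using f(1) x0(1) unfolding tree_aut_def by blast
  have fx0S: "f x0 \<notin> S"
  proof
    assume "f x0 \<in> S"
    then have "f x0 \<in> f ` S" using S(3) by simp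
    then obtain s where s: "s \<in> S" "f x0 = f s" by blast
    have "inj_on f V" using f(1) unfolding tree_aut_def by blast
    then have "x0 = s" using inj_onD[of f V x0 s] s SV x0(1) by blast
    then show False using x0S s(1) by blast
  qed
  have fp: "nearest S (f x0) (f p)" by (rule tree_aut_nearest[OF f(1) S(3) SV x0(1) p])
  have "p \<notin> fixed f" using f(2) by simp
  then have "p \<noteq> f p" using pV unfolding fixed_def by simp
  then have "tdist x0 (f x0) = tdist x0 p + tdist p (f p) + tdist (f p) (f x0)"
    by (rule tdist_via_nearest[OF S(1) x0(1) x0S fx0V fx0S p fp])
  moreover have "tdist x0 p \<noteq> 0" using tdist_zero[OF x0(1) pV] x0S pS by blast
  moreover have "tdist x0 (f x0) \<le> tdist p (f p)" using x0(2) pV by blast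
  ultimately show False by linarith
qed

text \<open>For a vertex x with a (b x) = x, the
  geodesic from x to b x is symmetric about the projection of x onto the fixed tree of b,
  and likewise for a; comparing the two descriptions of the same geodesic identifies the
  two projections.\<close>

lemma geo_reflected:
  assumes b: "tree_aut b" and p: "nearest (fixed b) x p" and x: "x \<in> V" "x \<notin> fixed b"
  shows "\<exists>as. geo x (b x) = as @ p # map b (rev as)"
proof -
  obtain as where as: "geo x p = as @ [p]" "last as \<notin> fixed b" "last as \<in> V" "as \<noteq> []"
    using nearest_path[OF fixed_subtree[OF b] p x] by blast
  have pV: "p \<in> V" "b p = p" using p unfolding nearest_def fixed_def by auto
  have bxV: "b x \<in> V" using b x(1) unfolding tree_aut_def by auto
  have "geo p (b x) = map b (geo p x)" using tree_aut_geo[OF b pV(1) x(1)] pV(2) by simp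
  also have "\<dots> = p # map b (rev as)" using geo_sym[OF x(1) pV(1)] as(1) pV(2) by simp
  finally have "geo p (b x) = p # map b (rev as)" .
  moreover have "b (last as) \<noteq> last as" using as(2,3) unfolding fixed_def by blast
  ultimately have "geo x (b x) = as @ p # map b (rev as)"
    using geo_concat[OF x(1) pV(1) bxV as(1)] as(4) by (simp add: hd_map hd_rev)
  then show ?thesis by blast
qed

lemma common_fixed_point:
  assumes a: "tree_aut a" and b: "tree_aut b"
    and ne: "fixed a \<noteq> {}" "fixed b \<noteq> {}" "fixed (\<lambda>x. a (b x)) \<noteq> {}"
  shows "fixed a \<inter> fixed b \<noteq> {}"
proof
  assume disj: "fixed a \<inter> fixed b = {}"
  obtain x where x: "x \<in> V" "a (b x) = x" using ne(3) unfolding fixed_def by blast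
  define y where "y = b x"
  have yV: "y \<in> V" using b x(1) unfolding tree_aut_def y_def by auto
  have xb: "x \<notin> fixed b" and ya: "y \<notin> fixed a" using disj x unfolding y_def fixed_def by auto
  obtain p where p: "nearest (fixed b) x p" using nearest_exists[OF ne(2)] by blast
  obtain q where q: "nearest (fixed a) y q" using nearest_exists[OF ne(1)] by blast
  obtain as where as: "geo x y = as @ p # map b (rev as)" using geo_reflected[OF b p x(1) xb] y_def by auto
  obtain bs where bs: "geo y x = bs @ q # map a (rev bs)" using geo_reflected[OF a q yV ya] x(2) y_def by auto
  have e: "as @ p # map b (rev as) = map a bs @ q # rev bs"
    using geo_sym[OF yV x(1)] as bs by (simp add: rev_map)
  then have "length (as @ p # map b (rev as)) = length (map a bs @ q # rev bs)" by simp
  then have "length as = length bs" by simp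
  then have "p = q" using e by simp
  then show False using p q disj unfolding nearest_def by blast
qed

lemma diameter_one_finite: assumes diam: "\<forall>x\<in>V. \<forall>y\<in>V. tdist x y \<le> 1" shows "finite V"
proof -
  obtain p where pV: "p \<in> V" using V_nonempty by blast
  have adj_of: "adj x y" if "x \<in> V" "y \<in> V" "x \<noteq> y" for x y
  proof -
    have "tdist x y \<noteq> 0" "tdist x y \<le> 1" using tdist_zero[OF that(1,2)] that diam by auto
    then show ?thesis using tdist_one_adj[OF that(1,2)] by simp
  qed
  have "V \<subseteq> {p, w}" if wV: "w \<in> V" "w \<noteq> p" for w
  proof
    fix u assume uV: "u \<in> V"
    show "u \<in> {p, w}"
    proof (rule ccontr)
      assume "u \<notin> {p, w}"
      then have "linked adj [u, p, w, u]" "no_backtrack [u, p, w, u]"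
        using adj_of uV pV wV by auto
      then show False using no_circuit[of "[u, p, w, u]"] by simp
    qed
  qed
  then have "V \<subseteq> {p} \<or> (\<exists>w. V \<subseteq> {p, w})" by blast
  then show ?thesis using finite_subset by blast
qed

lemma central_vertex:
  assumes diam: "\<forall>x\<in>V. \<forall>y\<in>V. tdist x y \<le> r" and "2 \<le> r"
  shows "\<exists>c\<in>V. \<forall>u\<in>V. tdist c u \<le> r - 1"
proof (cases "\<exists>p\<in>V. \<exists>w\<in>V. tdist p w = r")
  case False
  obtain c where cV: "c \<in> V" using V_nonempty by blast
  have "tdist c u \<le> r - 1" if "u \<in> V" for u
  proof -
    have "tdist c u \<le> r" "tdist c u \<noteq> r" using diam False cV that by auto
    then show ?thesis by linarith
  qed
  then show ?thesis using cV by blast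
next
  case True
  then obtain p w where pV: "p \<in> V" and wV: "w \<in> V" and dpw: "tdist p w = r" by blast
  let ?g = "geo p w"
  have len: "length ?g = r + 1" using dpw geo_nonempty[OF pV wV] unfolding tdist_def by (cases ?g) auto
  then have i1: "1 < length ?g" using \<open>2 \<le> r\<close> by simp
  have "tdist (?g ! 1) u \<le> r - 1" if uV: "u \<in> V" for u
  proof -
    have "tdist (?g ! 1) u + 1 = tdist (hd ?g) u \<or> tdist (last ?g) u = tdist (?g ! 1) u + (length ?g - 1 - 1)"
      by (rule tdist_unimodal) (use geo[OF pV wV] pV uV i1 in auto)
    then have "tdist (?g ! 1) u + 1 = tdist p u \<or> tdist w u = tdist (?g ! 1) u + (r - 1)"
      using geo(3,4)[OF pV wV] len by simp
    moreover have "tdist p u \<le> r" "tdist w u \<le> r" using diam pV wV uV by auto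
    ultimately show ?thesis using \<open>2 \<le> r\<close> by linarith
  qed
  moreover have "?g ! 1 \<in> V" using geo_in_V[OF pV wV] i1 by auto
  ultimately show ?thesis by blast
qed

lemma rtranclp_geo:
  assumes R: "\<And>a b. R a b \<Longrightarrow> adj a b" and xy: "R\<^sup>*\<^sup>* x y"
  shows "linked R (geo x y)"
proof -
  obtain ws where "linked R ws" "hd ws = x" "last ws = y" using rtranclp_linked[OF xy] by blast
  then obtain ys where ys: "linked R ys" "no_backtrack ys" "hd ys = x" "last ys = y"
    using reduce_walk by metis
  have "linked adj ys" using ys(1) R by (rule linked_mono)
  then have "geo x y = ys" using geo_unique ys(2-4) by blast
  then show ?thesis using ys(1) by simp
qed

lemma reachable_subtree:
  assumes R: "\<And>a b. R a b \<Longrightarrow> adj a b" and sym: "symp R" and v: "v \<in> V"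
  shows "subtree {x. R\<^sup>*\<^sup>* v x}"
proof -
  have inV: "x \<in> V" if "R\<^sup>*\<^sup>* v x" for x
    using that
  proof (induction rule: rtranclp_induct)
    case (step y z)
    show ?case using adj_in_V(2)[OF R[OF step(2)]] .
  qed (rule v)
  have "set (geo x y) \<subseteq> {x. R\<^sup>*\<^sup>* v x}" if x: "R\<^sup>*\<^sup>* v x" and y: "R\<^sup>*\<^sup>* v y" for x y
  proof
    fix z assume z: "z \<in> set (geo x y)"
    have "R\<^sup>*\<^sup>* x v" using x symp_rtranclp[OF sym] unfolding symp_def by blast
    then have "R\<^sup>*\<^sup>* x y" using y by simp
    then have "R\<^sup>*\<^sup>* x z" using linked_rtranclp[OF rtranclp_geo[OF R] z] geo(3)[OF inV[OF x] inV[OF y]] by simp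
    then show "z \<in> {x. R\<^sup>*\<^sup>* v x}" using x by simp
  qed
  then show ?thesis unfolding subtree_def using inV by blast
qed

end

locale minimal_tree_action = tree V adj for V :: "'v set" and adj :: "'v \<Rightarrow> 'v \<Rightarrow> bool" +
  fixes G :: "('g, 'b) monoid_scheme" and \<phi> :: "'g \<Rightarrow> 'v \<Rightarrow> 'v"
  assumes group: "group G" and action: "tree_action G V adj \<phi>" and minimal: "minimal_action G V adj \<phi>"
begin

lemma group_action: "group_action G V \<phi>"
  using action unfolding tree_action_def by blast

lemma act_in_V: "g \<in> carrier G \<Longrightarrow> x \<in> V \<Longrightarrow> \<phi> g x \<in> V"
  using group_action.element_image[OF group_action] by blast

lemma act_mult: "g \<in> carrier G \<Longrightarrow> h \<in> carrier G \<Longrightarrow> x \<in> V \<Longrightarrow> \<phi> (g \<otimes>\<^bsub>G\<^esub> h) x = \<phi> g (\<phi> h x)"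
  using group_action.composition_rule[OF group_action] by blast

lemma act_one: "x \<in> V \<Longrightarrow> \<phi> \<one>\<^bsub>G\<^esub> x = x"
  using group_action.id_eq_one[OF group_action] by (metis restrict_apply')

lemma act_inv_left: "g \<in> carrier G \<Longrightarrow> x \<in> V \<Longrightarrow> \<phi> (inv\<^bsub>G\<^esub> g) (\<phi> g x) = x"
  using group_action.orbit_sym_aux[OF group_action] by blast

lemma act_inv_right: "g \<in> carrier G \<Longrightarrow> x \<in> V \<Longrightarrow> \<phi> g (\<phi> (inv\<^bsub>G\<^esub> g) x) = x"
  using act_inv_left[of "inv\<^bsub>G\<^esub> g" x] group.inv_closed[OF group] group.inv_inv[OF group] by simp

lemma act_tree_aut: assumes "g \<in> carrier G" shows "tree_aut (\<phi> g)"
  unfolding tree_aut_def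
proof (intro conjI)
  show "inj_on (\<phi> g) V" by (rule group_action.inj_prop[OF group_action assms])
  show "\<phi> g ` V \<subseteq> V" using act_in_V[OF assms] by blast
  show "\<forall>x\<in>V. \<forall>y\<in>V. adj x y = adj (\<phi> g x) (\<phi> g y)" using action assms unfolding tree_action_def by blast
qed

lemma act_tdist: "g \<in> carrier G \<Longrightarrow> x \<in> V \<Longrightarrow> y \<in> V \<Longrightarrow> tdist (\<phi> g x) (\<phi> g y) = tdist x y"
  by (rule tree_aut_tdist[OF act_tree_aut])

lemma act_conj: assumes "g \<in> carrier G" "m \<in> carrier G" "y \<in> V"
  shows "\<phi> (g \<otimes>\<^bsub>G\<^esub> m \<otimes>\<^bsub>G\<^esub> inv\<^bsub>G\<^esub> g) y = \<phi> g (\<phi> m (\<phi> (inv\<^bsub>G\<^esub> g) y))"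
proof -
  have ig: "inv\<^bsub>G\<^esub> g \<in> carrier G" using group.inv_closed[OF group assms(1)] .
  have "g \<otimes>\<^bsub>G\<^esub> m \<in> carrier G" using group.subgroup_self[OF group] assms(1,2) by (simp add: subgroup.m_closed)
  then show ?thesis using act_mult[OF _ ig assms(3)] act_mult[OF assms(1,2) act_in_V[OF ig assms(3)]] by simp
qed

lemma act_image_eq:
  assumes "g \<in> carrier G" "S \<subseteq> V" "\<forall>s\<in>S. \<phi> g s \<in> S" "\<forall>s\<in>S. \<phi> (inv\<^bsub>G\<^esub> g) s \<in> S"
  shows "\<phi> g ` S = S"
proof
  show "\<phi> g ` S \<subseteq> S" using assms(3) by blast
  show "S \<subseteq> \<phi> g ` S"
  proof
    fix s assume "s \<in> S"
    then have "s = \<phi> g (\<phi> (inv\<^bsub>G\<^esub> g) s)" using act_inv_right[OF assms(1)] assms(2) by auto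
    then show "s \<in> \<phi> g ` S" using assms(4) \<open>s \<in> S\<close> by blast
  qed
qed

lemma invariant_subtree_eq_V:
  assumes "subtree S" "S \<noteq> {}" "\<forall>g\<in>carrier G. \<forall>x\<in>S. \<phi> g x \<in> S"
  shows "S = V"
  using minimal[unfolded minimal_action_def, rule_format, of S] subtree_connected[OF assms(1)]
    subtree_in_V[OF assms(1)] assms(2,3) by blast

lemma invariant_ball_around_eq_V:
  assumes W: "W \<subseteq> V" "\<forall>g\<in>carrier G. \<forall>w\<in>W. \<phi> g w \<in> W" and ne: "ball_around W r \<noteq> {}"
  shows "ball_around W r = V"
proof (rule invariant_subtree_eq_V[OF subtree_ball_around[OF W(1)] ne], intro ballI)
  fix g x assume g: "g \<in> carrier G" and x: "x \<in> ball_around W r"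
  have xV: "x \<in> V" using x unfolding ball_around_def by auto
  have ig: "inv\<^bsub>G\<^esub> g \<in> carrier G" using group.inv_closed[OF group g] .
  have "tdist (\<phi> g x) w \<le> r" if w: "w \<in> W" for w
  proof -
    have wV: "w \<in> V" using w W(1) by blast
    have "tdist (\<phi> g x) w = tdist (\<phi> g x) (\<phi> g (\<phi> (inv\<^bsub>G\<^esub> g) w))" using act_inv_right[OF g wV] by simp
    also have "\<dots> = tdist x (\<phi> (inv\<^bsub>G\<^esub> g) w)" using act_tdist[OF g xV act_in_V[OF ig wV]] .
    also have "\<dots> \<le> r" using x W(2) ig w unfolding ball_around_def by blast
    finally show ?thesis .
  qed
  then show "\<phi> g x \<in> ball_around W r" using act_in_V[OF g xV] unfolding ball_around_def by blast
qed

text \<open>A minimal action on a bounded tree is on a finite tree: the vertices of minimal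
  eccentricity form an invariant subtree, hence all of V, which forces diameter at most
  one.\<close>

lemma bounded_finite: assumes pV: "p \<in> V" and B: "\<forall>x\<in>V. tdist x p \<le> B" shows "finite V"
proof -
  let ?Z = "ball_around V"
  have Z_eq: "?Z r = V" if "?Z r \<noteq> {}" for r
    by (rule invariant_ball_around_eq_V[OF order_refl _ that]) (use act_in_V in blast)
  have "p \<in> ?Z B" using B tdist_sym pV unfolding ball_around_def by auto
  then have ex: "?Z B \<noteq> {}" by blast
  define r0 where "r0 = (LEAST r. ?Z r \<noteq> {})"
  have Zr0: "?Z r0 \<noteq> {}" unfolding r0_def by (rule LeastI[of "\<lambda>r. ?Z r \<noteq> {}", OF ex])
  have diam: "\<forall>x\<in>V. \<forall>y\<in>V. tdist x y \<le> r0" using Z_eq[OF Zr0] unfolding ball_around_def by blast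
  show ?thesis
  proof (cases "r0 \<le> 1")
    case True
    then show ?thesis using diam diameter_one_finite by fastforce
  next
    case False
    then obtain c where "c \<in> V" "\<forall>u\<in>V. tdist c u \<le> r0 - 1" using central_vertex[OF diam] by auto
    then have "?Z (r0 - 1) \<noteq> {}" unfolding ball_around_def by blast
    then have "r0 \<le> r0 - 1" unfolding r0_def by (rule Least_le)
    then show ?thesis using False by simp
  qed
qed

lemma bounded_orbit_finite:
  assumes pV: "p \<in> V" and orbit: "\<forall>g\<in>carrier G. tdist p (\<phi> g p) \<le> r"
  shows "finite V"
proof -
  let ?W = "(\<lambda>g. \<phi> g p) ` carrier G"
  have WV: "?W \<subseteq> V" using act_in_V pV by blast
  have W_inv: "\<forall>h\<in>carrier G. \<forall>w\<in>?W. \<phi> h w \<in> ?W"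
  proof (intro ballI)
    fix h w assume h: "h \<in> carrier G" and "w \<in> ?W"
    then obtain g where g: "g \<in> carrier G" "w = \<phi> g p" by blast
    then have "\<phi> h w = \<phi> (h \<otimes>\<^bsub>G\<^esub> g) p" using act_mult[OF h g(1) pV] by simp
    moreover have "h \<otimes>\<^bsub>G\<^esub> g \<in> carrier G" using h g(1) group.subgroup_self[OF group] by (simp add: subgroup.m_closed)
    ultimately show "\<phi> h w \<in> ?W" by blast
  qed
  have "p \<in> ball_around ?W r" using pV orbit unfolding ball_around_def by blast
  then have "ball_around ?W r = V" using invariant_ball_around_eq_V[OF WV W_inv] by blast
  moreover have "p \<in> ?W" using act_one[OF pV] group.subgroup_self[OF group] subgroup.one_closed by force
  ultimately have "\<forall>x\<in>V. tdist x p \<le> r" unfolding ball_around_def by blast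
  then show ?thesis by (rule bounded_finite[OF pV])
qed

lemma fixed_tdist_le:
  assumes acyl: "acylindrical k G adj \<phi>" and g: "g \<in> carrier G" "g \<noteq> \<one>\<^bsub>G\<^esub>"
    and x: "x \<in> fixed (\<phi> g)" and y: "y \<in> fixed (\<phi> g)"
  shows "tdist x y \<le> k"
proof (rule ccontr)
  assume "\<not> tdist x y \<le> k"
  then have long: "length (geo x y) - 1 > k" unfolding tdist_def by simp
  have xV: "x \<in> V" and yV: "y \<in> V" using x y unfolding fixed_def by auto
  have "\<forall>v\<in>set (geo x y). \<phi> g v = v"
    using subtree_geo[OF fixed_subtree[OF act_tree_aut[OF g(1)]] x y] unfolding fixed_def by blast
  then have "g \<in> {h \<in> carrier G. \<forall>v\<in>set (geo x y). \<phi> h v = v}" using g(1) by blast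
  then show False using acyl geo_geodesic[OF xV yV] long g(2) unfolding acylindrical_def by blast
qed

text \<open>If every element of a nontrivial normal subgroup M fixes a vertex, then for a fixed
  point p of some m \<noteq> 1 and any g, the fixed trees of m and of its conjugate by g meet
  (Serre's lemma, since their product lies in M); both have diameter at most k, so p is moved
  at most 2k by every g and the tree is finite.\<close>

lemma elliptic_normal_subgroup_finite:
  assumes acyl: "acylindrical k G adj \<phi>" and M: "normal M G" "M \<noteq> {\<one>\<^bsub>G\<^esub>}"
    and elliptic: "\<forall>m\<in>M. fixed (\<phi> m) \<noteq> {}"
  shows "finite V"
proof -
  interpret G: group G by (rule group)
  have subM: "subgroup M G" using normal_imp_subgroup[OF M(1)] .
  obtain m where m: "m \<in> M" "m \<noteq> \<one>\<^bsub>G\<^esub>" using M(2) subgroup.one_closed[OF subM] by blast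
  have mG: "m \<in> carrier G" using m(1) subgroup.subset[OF subM] by blast
  obtain p where p: "p \<in> fixed (\<phi> m)" using elliptic m(1) by blast
  have pV: "p \<in> V" using p unfolding fixed_def by simp
  have "tdist p (\<phi> g p) \<le> 2 * k" if g: "g \<in> carrier G" for g
  proof -
    define m' where "m' = g \<otimes>\<^bsub>G\<^esub> m \<otimes>\<^bsub>G\<^esub> inv\<^bsub>G\<^esub> g"
    have m'M: "m' \<in> M" unfolding m'_def using normal.inv_op_closed2[OF M(1) g m(1)] .
    have m'G: "m' \<in> carrier G" using m'M subgroup.subset[OF subM] by blast
    have "m' \<noteq> \<one>\<^bsub>G\<^esub>"
      using m(2) G.inv_solve_right'[of "\<one>\<^bsub>G\<^esub>" "g \<otimes>\<^bsub>G\<^esub> m" g] g mG unfolding m'_def by simp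
    have gp: "\<phi> g p \<in> fixed (\<phi> m')"
      using act_conj[OF g mG act_in_V[OF g pV]] act_inv_left[OF g pV] p act_in_V[OF g pV]
      unfolding m'_def fixed_def by simp
    have "fixed (\<lambda>x. \<phi> m (\<phi> m' x)) = fixed (\<phi> (m \<otimes>\<^bsub>G\<^esub> m'))"
      using act_mult[OF mG m'G] unfolding fixed_def by auto
    moreover have "m \<otimes>\<^bsub>G\<^esub> m' \<in> M" using subgroup.m_closed[OF subM m(1) m'M] .
    ultimately have "fixed (\<lambda>x. \<phi> m (\<phi> m' x)) \<noteq> {}" using elliptic by simp
    then obtain z where z: "z \<in> fixed (\<phi> m)" "z \<in> fixed (\<phi> m')"
      using common_fixed_point[OF act_tree_aut[OF mG] act_tree_aut[OF m'G]] p gp by blast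
    have "tdist p z \<le> k" by (rule fixed_tdist_le[OF acyl mG m(2) p z(1)])
    moreover have "tdist z (\<phi> g p) \<le> k" by (rule fixed_tdist_le[OF acyl m'G \<open>m' \<noteq> _\<close> z(2) gp])
    moreover have "tdist p (\<phi> g p) \<le> tdist p z + tdist z (\<phi> g p)"
      using tdist_triangle[OF pV _ act_in_V[OF g pV]] z(1) unfolding fixed_def by blast
    ultimately show ?thesis by linarith
  qed
  then show ?thesis using bounded_orbit_finite[OF pV] by blast
qed

lemma normal_invariant_image:
  assumes M: "normal M G" and g: "g \<in> carrier G" and S: "S \<subseteq> V" "\<forall>h\<in>M. \<forall>s\<in>S. \<phi> h s \<in> S"
  shows "\<forall>h\<in>M. \<forall>s\<in>\<phi> g ` S. \<phi> h s \<in> \<phi> g ` S"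
proof (intro ballI)
  fix h s' assume h: "h \<in> M" and "s' \<in> \<phi> g ` S"
  then obtain s where s: "s \<in> S" "s' = \<phi> g s" by blast
  have sV: "s \<in> V" using s(1) S(1) by blast
  have hG: "h \<in> carrier G" using h normal_imp_subgroup[OF M] subgroup.subset by blast
  have ig: "inv\<^bsub>G\<^esub> g \<in> carrier G" using group.inv_closed[OF group g] .
  have "inv\<^bsub>G\<^esub> g \<otimes>\<^bsub>G\<^esub> h \<otimes>\<^bsub>G\<^esub> inv\<^bsub>G\<^esub> (inv\<^bsub>G\<^esub> g) \<in> M"
    using normal.inv_op_closed2[OF M ig h] .
  then have "\<phi> (inv\<^bsub>G\<^esub> g \<otimes>\<^bsub>G\<^esub> h \<otimes>\<^bsub>G\<^esub> g) s \<in> S" using S(2) s(1) group.inv_inv[OF group g] by simp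
  moreover have "\<phi> (inv\<^bsub>G\<^esub> g \<otimes>\<^bsub>G\<^esub> h \<otimes>\<^bsub>G\<^esub> g) s = \<phi> (inv\<^bsub>G\<^esub> g) (\<phi> h s')"
    using act_conj[OF ig hG sV] group.inv_inv[OF group g] s(2) by simp
  ultimately have "\<phi> g (\<phi> (inv\<^bsub>G\<^esub> g) (\<phi> h s')) \<in> \<phi> g ` S" by simp
  then show "\<phi> h s' \<in> \<phi> g ` S"
    using act_inv_right[OF g] act_in_V[OF hG] act_in_V[OF g sV] s(2) by simp
qed

text \<open>If a normal subgroup M contains an element m without fixed points, then every
  nonempty M-invariant subtree is the whole tree: the intersection of all such subtrees
  contains every vertex of minimal displacement of m, and it is G-invariant by normality,
  hence equal to V by minimality.\<close>

lemma hyperbolic_normal_subgroup_minimal: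
  assumes M: "normal M G" and m: "m \<in> M" "fixed (\<phi> m) = {}"
    and S: "subtree S" "S \<noteq> {}" "\<forall>h\<in>M. \<forall>s\<in>S. \<phi> h s \<in> S"
  shows "S = V"
proof -
  have subM: "subgroup M G" using normal_imp_subgroup[OF M] .
  have mG: "m \<in> carrier G" and imM: "inv\<^bsub>G\<^esub> m \<in> M"
    using m(1) subgroup.subset[OF subM] subgroup.m_inv_closed[OF subM] by auto
  define \<F> where "\<F> = {S. subtree S \<and> S \<noteq> {} \<and> (\<forall>h\<in>M. \<forall>s\<in>S. \<phi> h s \<in> S)}"
  define C where "C = V \<inter> \<Inter>\<F>"
  obtain x0 where x0: "x0 \<in> V" "\<forall>x\<in>V. tdist x0 (\<phi> m x0) \<le> tdist x (\<phi> m x)"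
    using V_nonempty ex_has_least_nat[of "\<lambda>x. x \<in> V" _ "\<lambda>x. tdist x (\<phi> m x)"] by blast
  have "x0 \<in> T" if "T \<in> \<F>" for T
  proof (rule min_displacement_in_subtree[OF act_tree_aut[OF mG] m(2) x0])
    show "subtree T" "T \<noteq> {}" using that unfolding \<F>_def by auto
    show "\<phi> m ` T = T"
      using act_image_eq[OF mG subtree_in_V] that m(1) imM unfolding \<F>_def by blast
  qed
  then have x0C: "x0 \<in> C" using x0(1) unfolding C_def by blast
  have C_inv: "\<phi> g y \<in> C" if g: "g \<in> carrier G" and y: "y \<in> C" for g y
  proof -
    have ig: "inv\<^bsub>G\<^esub> g \<in> carrier G" using group.inv_closed[OF group g] .
    have "\<phi> g y \<in> T" if T: "T \<in> \<F>" for T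
    proof -
      have TV: "T \<subseteq> V" using T subtree_in_V unfolding \<F>_def by blast
      have "\<phi> (inv\<^bsub>G\<^esub> g) ` T \<in> \<F>"
        using subtree_image[OF act_tree_aut[OF ig]] normal_invariant_image[OF M ig TV] T unfolding \<F>_def by blast
      then obtain t where "t \<in> T" "y = \<phi> (inv\<^bsub>G\<^esub> g) t" using y unfolding C_def by blast
      then show ?thesis using act_inv_right[OF g] TV by auto
    qed
    then show ?thesis using act_in_V[OF g] y unfolding C_def by blast
  qed
  have "C = V"
    by (rule invariant_subtree_eq_V) (use subtree_Inter[of \<F>] x0C C_inv in \<open>auto simp: C_def \<F>_def\<close>)
  then show ?thesis using S subtree_in_V[OF S(1)] unfolding C_def \<F>_def by blast
qed

definition translated_edge :: "'g set \<Rightarrow> 'v set \<Rightarrow> 'v \<Rightarrow> 'v \<Rightarrow> bool" where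
  "translated_edge H T x y \<longleftrightarrow> (\<exists>h\<in>H. \<exists>a\<in>T. \<exists>b\<in>T. adj a b \<and> x = \<phi> h a \<and> y = \<phi> h b)"

lemma translated_edge_adj: assumes "H \<subseteq> carrier G" "translated_edge H T x y" shows "adj x y"
proof -
  obtain h a b where "h \<in> H" "adj a b" "x = \<phi> h a" "y = \<phi> h b"
    using assms(2) unfolding translated_edge_def by blast
  then show ?thesis using action assms(1) adj_in_V unfolding tree_action_def by blast
qed

lemma translated_edge_sym: "symp (translated_edge H T)"
  unfolding symp_def translated_edge_def using adj_sym by blast

lemma translated_edge_act:
  assumes H: "subgroup H G" and h: "h \<in> H" and xy: "translated_edge H T x y"
  shows "translated_edge H T (\<phi> h x) (\<phi> h y)"
proof -
  obtain h' a b where ab: "h' \<in> H" "a \<in> T" "b \<in> T" "adj a b" "x = \<phi> h' a" "y = \<phi> h' b"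
    using xy unfolding translated_edge_def by blast
  have G: "h \<in> carrier G" "h' \<in> carrier G" using h ab(1) subgroup.subset[OF H] by auto
  have "\<phi> h x = \<phi> (h \<otimes>\<^bsub>G\<^esub> h') a" "\<phi> h y = \<phi> (h \<otimes>\<^bsub>G\<^esub> h') b"
    using act_mult[OF G] adj_in_V[OF ab(4)] ab(5,6) by auto
  moreover have "h \<otimes>\<^bsub>G\<^esub> h' \<in> H" using subgroup.m_closed[OF H h ab(1)] .
  ultimately show ?thesis using ab(2-4) unfolding translated_edge_def by blast
qed

lemma translated_path_act:
  assumes H: "subgroup H G" and h: "h \<in> H" and xy: "(translated_edge H T)\<^sup>*\<^sup>* x y"
  shows "(translated_edge H T)\<^sup>*\<^sup>* (\<phi> h x) (\<phi> h y)"
  using xy by (induction rule: rtranclp_induct) (auto intro: rtranclp.rtrancl_into_rtrancl translated_edge_act[OF H h])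

lemma linked_translated_edge:
  assumes H: "subgroup H G" and xs: "linked adj xs" "set xs \<subseteq> T"
  shows "linked (translated_edge H T) xs"
proof -
  have "translated_edge H T a b" if ab: "adj a b" "a \<in> T" "b \<in> T" for a b
  proof -
    have "a = \<phi> \<one>\<^bsub>G\<^esub> a" "b = \<phi> \<one>\<^bsub>G\<^esub> b" using act_one adj_in_V[OF ab(1)] by auto
    then show ?thesis using ab subgroup.one_closed[OF H] unfolding translated_edge_def by blast
  qed
  then show ?thesis using xs by (induction adj xs rule: linked.induct) auto
qed

lemma generated_orbit_reachable:
  assumes H: "subgroup H G" and Sg: "Sg \<subseteq> H" and v: "v \<in> V"
    and T: "T = insert v (\<Union>s\<in>Sg. set (geo v (\<phi> s v)))" and h: "h \<in> generate G Sg"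
  shows "(translated_edge H T)\<^sup>*\<^sup>* v (\<phi> h v)"
proof -
  let ?R = "translated_edge H T"
  have HG: "\<And>g. g \<in> H \<Longrightarrow> g \<in> carrier G" using subgroup.subset[OF H] by blast
  have gen: "?R\<^sup>*\<^sup>* v (\<phi> s v)" if s: "s \<in> Sg" for s
  proof -
    have sv: "\<phi> s v \<in> V" using act_in_V[OF HG v] s Sg by blast
    have "set (geo v (\<phi> s v)) \<subseteq> T" using s T by blast
    then have "linked ?R (geo v (\<phi> s v))"
      by (rule linked_translated_edge[OF H geo(1)[OF v sv]])
    moreover have "\<phi> s v \<in> set (geo v (\<phi> s v))"
      using geo(4)[OF v sv] last_in_set[OF geo_nonempty[OF v sv]] by simp
    ultimately show ?thesis using linked_rtranclp[of ?R "geo v (\<phi> s v)"] geo(3)[OF v sv] by simp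
  qed
  from h show ?thesis
  proof (induction h rule: generate.induct)
    case one
    then show ?case using act_one[OF v] by simp
  next
    case (incl s)
    then show ?case by (rule gen)
  next
    case (inv s)
    have sG: "s \<in> carrier G" and isH: "inv\<^bsub>G\<^esub> s \<in> H"
      using inv Sg HG subgroup.m_inv_closed[OF H] by auto
    have "?R\<^sup>*\<^sup>* (\<phi> (inv\<^bsub>G\<^esub> s) v) (\<phi> (inv\<^bsub>G\<^esub> s) (\<phi> s v))"
      by (rule translated_path_act[OF H isH gen[OF inv]])
    then have "?R\<^sup>*\<^sup>* (\<phi> (inv\<^bsub>G\<^esub> s) v) v" using act_inv_left[OF sG v] by simp
    then show ?case using symp_rtranclp[OF translated_edge_sym] unfolding symp_def by blast
  next
    case (eng h1 h2)
    have h1H: "h1 \<in> H" and h2H: "h2 \<in> H"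
      using eng.hyps group.generate_subgroup_incl[OF group Sg H] by auto
    have "?R\<^sup>*\<^sup>* (\<phi> h1 v) (\<phi> h1 (\<phi> h2 v))" by (rule translated_path_act[OF H h1H eng.IH(2)])
    then have "?R\<^sup>*\<^sup>* (\<phi> h1 v) (\<phi> (h1 \<otimes>\<^bsub>G\<^esub> h2) v)" using act_mult[OF HG HG v] h1H h2H by simp
    then show ?case using eng.IH(1) by simp
  qed
qed

text \<open>If the translated edges connect a vertex v of T to every vertex, then T meets every
  H-orbit of vertices and every edge is a translated edge: a translated-edge path between
  the ends of an edge is the edge itself.\<close>

lemma translated_component_cover:
  assumes H: "subgroup H G" and v: "v \<in> T" and reach: "\<And>x. x \<in> V \<Longrightarrow> (translated_edge H T)\<^sup>*\<^sup>* v x"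
  shows "\<forall>x\<in>V. \<exists>h\<in>H. \<exists>t\<in>T. x = \<phi> h t" "\<forall>x y. adj x y \<longrightarrow> translated_edge H T x y"
proof -
  let ?R = "translated_edge H T"
  have R_adj: "\<And>a b. ?R a b \<Longrightarrow> adj a b" using translated_edge_adj subgroup.subset[OF H] by blast
  have "?R x y" if xy: "adj x y" for x y
  proof -
    have "?R\<^sup>*\<^sup>* x v" "?R\<^sup>*\<^sup>* v y"
      using reach adj_in_V[OF xy] symp_rtranclp[OF translated_edge_sym] unfolding symp_def by blast+
    then have "?R\<^sup>*\<^sup>* x y" by (rule rtranclp_trans)
    then have "linked ?R (geo x y)" using rtranclp_geo[of ?R x y, OF R_adj] by simp
    then show ?thesis using geo_adj[OF xy] by simp
  qed
  then show "\<forall>x y. adj x y \<longrightarrow> ?R x y" by blast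
  show "\<forall>x\<in>V. \<exists>h\<in>H. \<exists>t\<in>T. x = \<phi> h t"
  proof
    fix x assume x: "x \<in> V"
    show "\<exists>h\<in>H. \<exists>t\<in>T. x = \<phi> h t"
    proof (cases "x = v")
      case True
      have "x = \<phi> \<one>\<^bsub>G\<^esub> x" using act_one[OF x] by simp
      then show ?thesis using True v subgroup.one_closed[OF H] by blast
    next
      case False
      have "\<exists>y. ?R y x" using reach[OF x] False by (cases rule: rtranclp.cases) auto
      then show ?thesis unfolding translated_edge_def by blast
    qed
  qed
qed

text \<open>The component of v for the translated edges is a nonempty
  M-invariant subtree, hence all of V.\<close>

lemma finitely_generated_cover:
  assumes H: "finitely_generated_subgroup G H" and M: "normal M G" "M \<subseteq> H"
    and m: "m \<in> M" "fixed (\<phi> m) = {}"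
  shows "\<exists>T. finite T \<and> T \<subseteq> V \<and> (\<forall>x\<in>V. \<exists>h\<in>H. \<exists>t\<in>T. x = \<phi> h t)
           \<and> (\<forall>x y. adj x y \<longrightarrow> translated_edge H T x y)"
proof -
  obtain Sg where Sg: "finite Sg" "Sg \<subseteq> H" "generate G Sg = H" and subH: "subgroup H G"
    using H unfolding finitely_generated_subgroup_def by blast
  have HG: "\<And>g. g \<in> H \<Longrightarrow> g \<in> carrier G" using subgroup.subset[OF subH] by blast
  obtain v where v: "v \<in> V" using V_nonempty by blast
  define T where "T = insert v (\<Union>s\<in>Sg. set (geo v (\<phi> s v)))"
  let ?R = "translated_edge H T"
  have T: "finite T" "T \<subseteq> V" using Sg(1,2) geo_in_V[OF v act_in_V[OF HG v]] v unfolding T_def by auto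
  have orbit: "?R\<^sup>*\<^sup>* v (\<phi> h v)" if "h \<in> H" for h
    using generated_orbit_reachable[OF subH Sg(2) v T_def] that Sg(3) by blast
  have reach_V: "{x. ?R\<^sup>*\<^sup>* v x} = V"
  proof (rule hyperbolic_normal_subgroup_minimal[OF M(1) m])
    have "\<And>a b. ?R a b \<Longrightarrow> adj a b" using translated_edge_adj HG by blast
    then show "subtree {x. ?R\<^sup>*\<^sup>* v x}" by (rule reachable_subtree[OF _ translated_edge_sym v])
    show "{x. ?R\<^sup>*\<^sup>* v x} \<noteq> {}" by blast
    show "\<forall>h\<in>M. \<forall>s\<in>{x. ?R\<^sup>*\<^sup>* v x}. \<phi> h s \<in> {x. ?R\<^sup>*\<^sup>* v x}"
    proof (intro ballI)
      fix h s assume h: "h \<in> M" and "s \<in> {x. ?R\<^sup>*\<^sup>* v x}"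
      then have "?R\<^sup>*\<^sup>* (\<phi> h v) (\<phi> h s)" using translated_path_act[OF subH] M(2) by blast
      then show "\<phi> h s \<in> {x. ?R\<^sup>*\<^sup>* v x}" using orbit[of h] h M(2) by auto
    qed
  qed
  have reach: "?R\<^sup>*\<^sup>* v x" if "x \<in> V" for x
  proof -
    have "x \<in> {x. ?R\<^sup>*\<^sup>* v x}" using that reach_V by simp
    then show ?thesis by simp
  qed
  have vT: "v \<in> T" unfolding T_def by simp
  note cover = translated_component_cover[OF subH vT reach]
  show ?thesis using T cover by (intro exI[of _ T]) blast
qed

text \<open>Right translation by an element of H permutes H, so orbits of H-translates of a
  point or an edge do not depend on the chosen representative.\<close>

lemma orbit_shift:
  assumes H: "subgroup H G" and h: "h \<in> H"
  shows "(\<lambda>h'. F (h' \<otimes>\<^bsub>G\<^esub> h)) ` H = F ` H"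
proof -
  have "(\<lambda>h'. h' \<otimes>\<^bsub>G\<^esub> h) ` H = H #>\<^bsub>G\<^esub> h" unfolding r_coset_def by auto
  also have "\<dots> = H" by (rule subgroup.rcos_const[OF H group h])
  finally have "F ` (\<lambda>h'. h' \<otimes>\<^bsub>G\<^esub> h) ` H = F ` H" by (rule arg_cong)
  then show ?thesis by (simp add: image_image)
qed

lemma cocompact_of_cover:
  assumes H: "subgroup H G" and T: "finite T" "T \<subseteq> V"
    and vertices: "\<forall>x\<in>V. \<exists>h\<in>H. \<exists>t\<in>T. x = \<phi> h t"
    and edges: "\<forall>x y. adj x y \<longrightarrow> translated_edge H T x y"
  shows "cocompact_on H V adj \<phi>"
  unfolding cocompact_on_def
proof
  have HG: "\<And>g. g \<in> H \<Longrightarrow> g \<in> carrier G" using subgroup.subset[OF H] by blast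
  have "{{\<phi> h x | h. h \<in> H} | x. x \<in> V} \<subseteq> (\<lambda>t. (\<lambda>h. \<phi> h t) ` H) ` T"
  proof
    fix X assume "X \<in> {{\<phi> h x | h. h \<in> H} | x. x \<in> V}"
    then obtain x where x: "x \<in> V" "X = {\<phi> h x | h. h \<in> H}" by blast
    then have X: "X = (\<lambda>h. \<phi> h x) ` H" by (simp add: Setcompr_eq_image)
    obtain h t where ht: "h \<in> H" "t \<in> T" "x = \<phi> h t" using vertices x(1) by blast
    have tV: "t \<in> V" using ht(2) T(2) by blast
    have "X = (\<lambda>h'. \<phi> (h' \<otimes>\<^bsub>G\<^esub> h) t) ` H"
      unfolding X ht(3) by (rule image_cong[OF refl]) (simp add: act_mult HG ht(1) tV)
    also have "\<dots> = (\<lambda>h'. \<phi> h' t) ` H" by (rule orbit_shift[OF H ht(1)])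
    finally show "X \<in> (\<lambda>t. (\<lambda>h. \<phi> h t) ` H) ` T" using ht(2) by (rule image_eqI)
  qed
  then show "finite {{\<phi> h x | h. h \<in> H} | x. x \<in> V}" by (rule finite_subset) (simp add: T(1))
  have "{{{\<phi> h x, \<phi> h y} | h. h \<in> H} | x y. adj x y}
          \<subseteq> (\<lambda>(a, b). (\<lambda>h. {\<phi> h a, \<phi> h b}) ` H) ` (T \<times> T)"
  proof
    fix X assume "X \<in> {{{\<phi> h x, \<phi> h y} | h. h \<in> H} | x y. adj x y}"
    then obtain x y where xy: "adj x y" "X = {{\<phi> h x, \<phi> h y} | h. h \<in> H}" by blast
    then have X: "X = (\<lambda>h. {\<phi> h x, \<phi> h y}) ` H" by (simp add: Setcompr_eq_image)
    obtain h a b where hab: "h \<in> H" "a \<in> T" "b \<in> T" "adj a b" "x = \<phi> h a" "y = \<phi> h b"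
      using edges xy(1) unfolding translated_edge_def by blast
    have abV: "a \<in> V" "b \<in> V" using adj_in_V[OF hab(4)] by auto
    have "X = (\<lambda>h'. {\<phi> (h' \<otimes>\<^bsub>G\<^esub> h) a, \<phi> (h' \<otimes>\<^bsub>G\<^esub> h) b}) ` H"
      unfolding X hab(5,6) by (rule image_cong[OF refl]) (simp add: act_mult HG hab(1) abV)
    also have "\<dots> = (\<lambda>h'. {\<phi> h' a, \<phi> h' b}) ` H"
      by (rule orbit_shift[OF H hab(1), of "\<lambda>g. {\<phi> g a, \<phi> g b}"])
    finally have "X = (\<lambda>(a, b). (\<lambda>h. {\<phi> h a, \<phi> h b}) ` H) (a, b)" by simp
    then show "X \<in> (\<lambda>(a, b). (\<lambda>h. {\<phi> h a, \<phi> h b}) ` H) ` (T \<times> T)"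
      using hab(2,3) by (rule image_eqI[OF _ SigmaI])
  qed
  then show "finite {{{\<phi> h x, \<phi> h y} | h. h \<in> H} | x y. adj x y}"
    by (rule finite_subset) (simp add: T(1))
qed

lemma cocompact_of_finite:
  assumes H: "subgroup H G" and fin: "finite V"
  shows "cocompact_on H V adj \<phi>"
proof (rule cocompact_of_cover[OF H fin order_refl])
  have one: "\<one>\<^bsub>G\<^esub> \<in> H" by (rule subgroup.one_closed[OF H])
  have fix_one: "x = \<phi> \<one>\<^bsub>G\<^esub> x" if "x \<in> V" for x using act_one[OF that] by simp
  show "\<forall>x\<in>V. \<exists>h\<in>H. \<exists>t\<in>V. x = \<phi> h t" using one fix_one by blast
  have "translated_edge H V x y" if xy: "adj x y" for x y
    unfolding translated_edge_def using one xy fix_one adj_in_V[OF xy] by blast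
  then show "\<forall>x y. adj x y \<longrightarrow> translated_edge H V x y" by blast
qed

end

theorem lemma5p1:
  fixes G :: "('g, 'b) monoid_scheme" and V :: "'v set" and adj :: "'v \<Rightarrow> 'v \<Rightarrow> bool"
    and \<phi> :: "'g \<Rightarrow> 'v \<Rightarrow> 'v" and k :: nat and H M :: "'g set"
  assumes "group G"
    and "tree_action G V adj \<phi>"
    and "without_inversions G adj \<phi>"
    and "acylindrical k G adj \<phi>"
    and "cocompact_on (carrier G) V adj \<phi>"
    and "minimal_action G V adj \<phi>"
    and "finitely_generated_subgroup G H"
    and "M \<subseteq> H" and "normal M G" and "M \<noteq> {\<one>\<^bsub>G\<^esub>}"
  shows "cocompact_on H V adj \<phi>"
proof -
  have "tree V adj" using assms(2) unfolding tree_action_def by (simp add: tree.intro)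
  then interpret minimal_tree_action V adj G \<phi>
    by (rule minimal_tree_action.intro) (simp add: minimal_tree_action_axioms_def assms(1,2,6))
  have H: "subgroup H G" using assms(7) unfolding finitely_generated_subgroup_def by blast
  show ?thesis
  proof (cases "finite V")
    case True
    then show ?thesis by (rule cocompact_of_finite[OF H])
  next
    case False
    then have "\<not> (\<forall>m\<in>M. fixed (\<phi> m) \<noteq> {})"
      using elliptic_normal_subgroup_finite[OF assms(4,9,10)] by blast
    then obtain m where m: "m \<in> M" "fixed (\<phi> m) = {}" by blast
    obtain T where "finite T" "T \<subseteq> V" "\<forall>x\<in>V. \<exists>h\<in>H. \<exists>t\<in>T. x = \<phi> h t"
        "\<forall>x y. adj x y \<longrightarrow> translated_edge H T x y"
      using finitely_generated_cover[OF assms(7,9,8) m] by blast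
    then show ?thesis by (rule cocompact_of_cover[OF H])
  qed
qed

end
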